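(* Let $p=d/n$, and let $\sigma,\theta$ satisfy the hypotheses: $\theta>1$, $\sigma\in(0,1]$, $\left(\frac{\sigma e d}{2\theta}\right)^{\theta}\le \frac{\sigma}{2e}$ and $d=o(n^{1-1/\theta})$. Let $\Delta,\tau>0$ with $m:=(\Delta-2\theta)\tau>1$, $$\left(\frac{\sigma e d}{m}\right)^{m}\le \frac{\sigma}{4e},$$ and $d=o(n^{1-1/m})$. Then w.h.p. $G_{n,p}$ contains no pair of sets $T\subseteq S\subseteq[n]$ with $|S|=s\le\sigma n$, $|T|\ge \tau s$, and $d_S(v)\ge \Delta$ for every $v\in T$.
   Context: $G_{n,p}$ is the binomial random graph on $[n]$; $d_S(v)$ denotes the number of neighbors of $v$ in $S$. W.h.p. means with probability tending to 1 as $n\to\infty$. *)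

theory Defs
  imports "HOL-Probability.Probability" "HOL-Library.Landau_Symbols"
begin

text \<open>Binomial random graph G(n,p) on the vertex set [n] = {0..<n}: each unordered pair
  {i,j} with i < j < n (encoded as the pair (i,j)) is an edge independently with probability p.
  A sample is an indicator function on pairs (False outside the admissible pairs).\<close>
definition gnp :: "nat \<Rightarrow> real \<Rightarrow> (nat \<times> nat \<Rightarrow> bool) pmf" where
  "gnp n p = Pi_pmf {(i, j). i < j \<and> j < n} False (\<lambda>_. bernoulli_pmf p)"

definition adj :: "(nat \<times> nat \<Rightarrow> bool) \<Rightarrow> nat \<Rightarrow> nat \<Rightarrow> bool" where
  "adj G u v \<longleftrightarrow> u \<noteq> v \<and> G (min u v, max u v)"

definition degIn :: "(nat \<times> nat \<Rightarrow> bool) \<Rightarrow> nat set \<Rightarrow> nat \<Rightarrow> nat" where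
  "degIn G S v = card {u \<in> S. adj G u v}"

definition bad_pair :: "nat \<Rightarrow> real \<Rightarrow> real \<Rightarrow> real \<Rightarrow> (nat \<times> nat \<Rightarrow> bool) \<Rightarrow> bool" where
  "bad_pair n \<sigma> \<tau> \<Delta> G \<longleftrightarrow>
     (\<exists>S T. T \<subseteq> S \<and> S \<subseteq> {..<n} \<and> S \<noteq> {} \<and> real (card S) \<le> \<sigma> * real n \<and>
            real (card T) \<ge> \<tau> * real (card S) \<and> (\<forall>v\<in>T. real (degIn G S v) \<ge> \<Delta>))"

end

theory Submission
  imports Defs "HOL-Real_Asymp.Real_Asymp"
begin

(* Proof idea (first-moment method).  If T \<subseteq> S is a bad pair, double counting the degrees
   d_S(v), v \<in> T, gives  \<Delta>|T| \<le> 2 e(T) + e(T, S - T).  Hence either T itself spans at least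
   \<theta>|T| edges, or at least (\<Delta> - 2\<theta>)|T| \<ge> m|S| edges run between T and S - T, where
   m = (\<Delta> - 2\<theta>)\<tau>.  Both alternatives are instances of one "heavy" event: some vertex set U
   with |U| = t \<le> \<sigma>n and some set P of at most t^2/a vertex pairs attached to U contain at
   least \<gamma>t edges.  A union bound over U, P and the \<lceil>\<gamma>t\<rceil>-subsets of P, with
   binom(N,k) \<le> (eN/k)^k, bounds the probability of a heavy event by
   \<Sum>_{1 \<le> t \<le> \<sigma>n} ((t/(\<sigma>n))^(\<gamma>-1)/2)^t, and this sum tends to 0 for every \<gamma> > 1.
   The file develops: elementary estimates; edge-event probabilities in G(n,p); the
   deterministic dichotomy for bad pairs; the bound for heavy events; the vanishing of the
   sums; and finally the theorem. *)

text \<open>The lower bound k! \<ge> (k/e)^k, read off from one term of the series of exp k.\<close>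
lemma fact_ge_pow_over_e: "(real k / exp 1) ^ k \<le> fact k"
proof -
  have s: "(\<lambda>n. real k ^ n / fact n) sums exp (real k)"
    using exp_converges[of "real k"] by (simp add: divide_inverse mult.commute)
  have "(\<Sum>n\<in>{k}. real k ^ n / fact n) \<le> (\<Sum>n. real k ^ n / fact n)"
    by (rule sum_le_suminf) (use s sums_summable in auto)
  hence "real k ^ k / fact k \<le> exp (real k)" using s sums_unique by force
  hence "real k ^ k \<le> exp (real k) * fact k" by (simp add: divide_le_eq)
  moreover have "exp (real k) = exp 1 ^ k" by (simp add: exp_of_nat_mult[symmetric])
  ultimately show ?thesis by (simp add: power_divide divide_le_eq mult.commute)
qed

lemma binomial_le_exp_pow:
  assumes "k \<ge> 1"
  shows "real (n choose k) \<le> (exp 1 * real n / real k) ^ k"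
proof (cases "k \<le> n")
  case True
  have dvd: "fact (n - k) dvd (fact n :: nat)" using True by (simp add: fact_dvd)
  have "fact k * real (n choose k) = fact n / fact (n - k)"
    using True by (rule fact_binomial)
  also have "\<dots> = real (fact n div fact (n - k))" using dvd by (simp add: real_of_nat_div)
  also have "\<dots> \<le> real n ^ k"
    using fact_div_fact_le_pow[OF True] by (metis of_nat_le_iff of_nat_power)
  finally have "fact k * real (n choose k) \<le> real n ^ k" .
  moreover have "(real k / exp 1) ^ k * real (n choose k) \<le> fact k * real (n choose k)"
    by (rule mult_right_mono[OF fact_ge_pow_over_e]) simp
  moreover have "(real k / exp 1) ^ k > 0" using assms by simp
  ultimately have "real (n choose k) \<le> real n ^ k / (real k / exp 1) ^ k"
    by (simp add: le_divide_eq mult.commute)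
  also have "\<dots> = (exp 1 * real n / real k) ^ k" by (simp add: power_divide power_mult_distrib)
  finally show ?thesis .
next
  case False
  thus ?thesis by (simp add: binomial_eq_0)
qed

lemma le_one_if_powr_less_one:
  fixes z g c :: real
  assumes "0 \<le> z" "0 < g" "z powr g \<le> c" "c < 1"
  shows "z \<le> 1"
proof (rule ccontr)
  assume "\<not> z \<le> 1"
  hence "z powr g > 1" using powr_less_mono2[OF assms(2), of 1 z] by simp
  thus False using assms by simp
qed

lemma real_le_of_le_nat_floor:
  assumes "1 \<le> t" "t \<le> nat \<lfloor>x\<rfloor>"
  shows "real t \<le> x"
proof -
  have "x \<ge> 0" using assms by (cases "x \<le> 0") (auto simp: nat_floor_neg)
  thus ?thesis using assms(2) of_nat_floor[of x] by (meson of_nat_le_iff order.trans)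
qed

lemma pow_le_powr_pow:
  fixes y \<gamma> :: real
  assumes y: "0 \<le> y" "y \<le> 1" and k: "real k \<ge> \<gamma> * real t" "k \<ge> 1" and t: "t \<ge> 1"
  shows "y ^ k \<le> (y powr \<gamma>) ^ t"
proof (cases "y = 0")
  case True thus ?thesis using k t by (simp add: power_0_left)
next
  case False
  hence "y ^ k = y powr real k" using y by (simp add: powr_realpow)
  also have "\<dots> \<le> y powr (\<gamma> * real t)" by (rule powr_mono'[OF k(1) y])
  also have "\<dots> = (y powr \<gamma>) ^ t" using t y by (simp add: powr_powr[symmetric] powr_realpow')
  finally show ?thesis .
qed

section \<open>Edge events in G(n,p)\<close>

definition vertex_pairs :: "nat \<Rightarrow> (nat \<times> nat) set" where
  "vertex_pairs n = {(i, j). i < j \<and> j < n}"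

definition present :: "(nat \<times> nat \<Rightarrow> bool) \<Rightarrow> (nat \<times> nat) set \<Rightarrow> (nat \<times> nat) set" where
  "present G P = {e \<in> P. G e}"

lemma finite_vertex_pairs: "finite (vertex_pairs n)"
  by (rule finite_subset[of _ "{..<n} \<times> {..<n}"]) (auto simp: vertex_pairs_def)

lemma prob_all_present:
  assumes F: "F \<subseteq> vertex_pairs n" and p: "0 \<le> p" "p \<le> 1"
  shows "measure_pmf.prob (gnp n p) {G. \<forall>e\<in>F. G e} = p ^ card F"
proof -
  define B where "B = (\<lambda>e. if e \<in> F then {True} else (UNIV :: bool set))"
  have "{G. \<forall>e\<in>F. G e} = Pi (vertex_pairs n) B" using F by (auto simp: B_def Pi_def)
  hence "measure_pmf.prob (gnp n p) {G. \<forall>e\<in>F. G e}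
         = (\<Prod>e\<in>vertex_pairs n. measure_pmf.prob (bernoulli_pmf p) (B e))"
    unfolding gnp_def vertex_pairs_def[symmetric]
    by (simp add: measure_Pi_pmf_Pi finite_vertex_pairs)
  also have "\<dots> = (\<Prod>e\<in>vertex_pairs n. if e \<in> F then p else 1)"
    by (intro prod.cong refl) (simp add: B_def measure_pmf_single p)
  also have "\<dots> = p ^ card F"
    using F by (simp add: prod.If_cases[OF finite_vertex_pairs] Int_absorb1)
  finally show ?thesis .
qed

text \<open>Union bound over the k-subsets: at least k of at most Q given pairs are edges with
  probability at most (eQp/k)^k.\<close>
lemma prob_many_present:
  assumes P: "P \<subseteq> vertex_pairs n" and p: "0 \<le> p" "p \<le> 1"
    and Q: "real (card P) \<le> Q" and k: "k \<ge> 1"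
  shows "measure_pmf.prob (gnp n p) {G. k \<le> card (present G P)} \<le> (exp 1 * Q * p / real k) ^ k"
proof -
  have finP: "finite P" using P finite_vertex_pairs finite_subset by blast
  let ?Fs = "{F. F \<subseteq> P \<and> card F = k}"
  have "{G. k \<le> card (present G P)} \<subseteq> (\<Union>F\<in>?Fs. {G. \<forall>e\<in>F. G e})"
  proof
    fix G assume "G \<in> {G. k \<le> card (present G P)}"
    then obtain F where "F \<subseteq> present G P" "card F = k"
      by (auto intro: obtain_subset_with_card_n)
    thus "G \<in> (\<Union>F\<in>?Fs. {G. \<forall>e\<in>F. G e})" by (auto simp: present_def)
  qed
  hence "measure_pmf.prob (gnp n p) {G. k \<le> card (present G P)}
         \<le> measure_pmf.prob (gnp n p) (\<Union>F\<in>?Fs. {G. \<forall>e\<in>F. G e})"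
    by (rule measure_pmf.finite_measure_mono) simp
  also have "\<dots> \<le> (\<Sum>F\<in>?Fs. measure_pmf.prob (gnp n p) {G. \<forall>e\<in>F. G e})"
    by (rule measure_pmf.finite_measure_subadditive_finite) (use finP in auto)
  also have "\<dots> = (\<Sum>F\<in>?Fs. p ^ k)"
    by (intro sum.cong refl) (use P p in \<open>auto simp: prob_all_present\<close>)
  also have "\<dots> = real (card P choose k) * p ^ k" by (simp add: n_subsets finP)
  also have "\<dots> \<le> (exp 1 * real (card P) / real k) ^ k * p ^ k"
    by (intro mult_right_mono binomial_le_exp_pow k) (use p in simp)
  also have "\<dots> \<le> (exp 1 * Q / real k) ^ k * p ^ k"
    by (intro mult_right_mono power_mono divide_right_mono mult_left_mono Q) (use p in auto)
  also have "\<dots> = (exp 1 * Q * p / real k) ^ k" by (simp add: power_mult_distrib[symmetric])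
  finally show ?thesis .
qed

section \<open>Bad pairs force many edges\<close>

definition pairs_in :: "nat set \<Rightarrow> (nat \<times> nat) set" where
  "pairs_in U = {(i, j). i < j \<and> i \<in> U \<and> j \<in> U}"

definition cross_pairs :: "nat set \<Rightarrow> nat set \<Rightarrow> (nat \<times> nat) set" where
  "cross_pairs T S = {(i, j). i < j \<and> ((i \<in> T \<and> j \<in> S - T) \<or> (j \<in> T \<and> i \<in> S - T))}"

lemma pairs_in_vertex_pairs: "U \<subseteq> {..<n} \<Longrightarrow> pairs_in U \<subseteq> vertex_pairs n"
  by (auto simp: pairs_in_def vertex_pairs_def)

lemma cross_pairs_vertex_pairs: "S \<subseteq> {..<n} \<Longrightarrow> T \<subseteq> S \<Longrightarrow> cross_pairs T S \<subseteq> vertex_pairs n"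
  by (auto simp: cross_pairs_def vertex_pairs_def)

lemma finite_pairs_in: "finite U \<Longrightarrow> finite (pairs_in U)"
  by (rule finite_subset[of _ "U \<times> U"]) (auto simp: pairs_in_def)

lemma card_pairs_in:
  assumes "finite U"
  shows "real (card (pairs_in U)) \<le> real (card U) ^ 2 / 2"
proof -
  have fin: "finite (pairs_in U)" using assms by (rule finite_pairs_in)
  have "card (pairs_in U) + card (prod.swap ` pairs_in U) = card (pairs_in U \<union> prod.swap ` pairs_in U)"
    using fin by (intro card_Un_disjoint[symmetric]) (auto simp: pairs_in_def)
  also have "\<dots> \<le> card (U \<times> U)"
    using assms by (intro card_mono) (auto simp: pairs_in_def)
  finally have "2 * card (pairs_in U) \<le> card U * card U"
    by (simp add: card_image card_cartesian_product)
  hence "2 * real (card (pairs_in U)) \<le> real (card U) * real (card U)"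
    by (metis of_nat_le_iff of_nat_mult of_nat_numeral)
  thus ?thesis by (simp add: power2_eq_square)
qed

lemma card_cross_pairs:
  assumes "finite S" "T \<subseteq> S"
  shows "real (card (cross_pairs T S)) \<le> real (card S) ^ 2"
proof -
  have "card (cross_pairs T S) \<le> card (S \<times> S)"
    using assms by (intro card_mono) (auto simp: cross_pairs_def)
  thus ?thesis by (simp add: card_cartesian_product power2_eq_square flip: of_nat_mult)
qed

text \<open>Each edge inside T is counted twice in the degrees d_T(v), v \<in> T.\<close>
lemma sum_inner_degrees:
  assumes T: "finite T"
  shows "(\<Sum>v\<in>T. card {u\<in>T. adj G u v}) \<le> 2 * card (present G (pairs_in T))"
proof -
  define E where "E = present G (pairs_in T)"
  have finE: "finite E" unfolding E_def present_def using T finite_pairs_in by simp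
  have "(\<Sum>v\<in>T. card {u\<in>T. adj G u v}) = card (SIGMA v:T. {u\<in>T. adj G u v})"
    using T by (simp add: card_SigmaI)
  also have "\<dots> \<le> card (E \<union> prod.swap ` E)"
  proof (rule card_mono)
    show "finite (E \<union> prod.swap ` E)" using finE by simp
    show "(SIGMA v:T. {u\<in>T. adj G u v}) \<subseteq> E \<union> prod.swap ` E"
    proof clarify
      fix v u assume vu: "v \<in> T" "u \<in> T" "adj G u v" "(v, u) \<notin> prod.swap ` E"
      hence "(u, v) \<notin> E" by (metis image_eqI swap_simp)
      with vu show "(v, u) \<in> E"
        by (cases "v < u") (auto simp: E_def present_def pairs_in_def adj_def min_def max_def)
    qed
  qed
  also have "\<dots> \<le> card E + card (prod.swap ` E)" by (rule card_Un_le)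
  also have "card (prod.swap ` E) \<le> card E" by (rule card_image_le[OF finE])
  finally show ?thesis unfolding E_def by simp
qed

text \<open>Each edge between T and S - T is counted once in the degrees d_{S-T}(v), v \<in> T.\<close>
lemma sum_outer_degrees:
  assumes S: "finite S" and TS: "T \<subseteq> S"
  shows "(\<Sum>v\<in>T. card {u\<in>S - T. adj G u v}) \<le> card (present G (cross_pairs T S))"
proof -
  have "(\<Sum>v\<in>T. card {u\<in>S - T. adj G u v}) = card (SIGMA v:T. {u\<in>S - T. adj G u v})"
    using S finite_subset[OF TS S] by (simp add: card_SigmaI)
  also have "\<dots> \<le> card (present G (cross_pairs T S))"
  proof (rule card_inj_on_le[where f = "\<lambda>(v, u). (min v u, max v u)"])
    show "inj_on (\<lambda>(v, u). (min v u, max v u)) (SIGMA v:T. {u\<in>S - T. adj G u v})"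
      by (auto simp: inj_on_def min_def max_def split: if_splits)
    show "(\<lambda>(v, u). (min v u, max v u)) ` (SIGMA v:T. {u\<in>S - T. adj G u v})
          \<subseteq> present G (cross_pairs T S)"
      by (auto simp: present_def cross_pairs_def adj_def min_def max_def split: if_splits)
    show "finite (present G (cross_pairs T S))"
      by (rule finite_subset[of _ "S \<times> S"]) (use S TS in \<open>auto simp: present_def cross_pairs_def\<close>)
  qed
  finally show ?thesis .
qed

lemma sum_degrees_le:
  assumes S: "finite S" and TS: "T \<subseteq> S"
  shows "(\<Sum>v\<in>T. real (degIn G S v))
         \<le> 2 * real (card (present G (pairs_in T))) + real (card (present G (cross_pairs T S)))"
proof -
  have T: "finite T" using S TS finite_subset by blast
  have split: "degIn G S v = card {u\<in>T. adj G u v} + card {u\<in>S - T. adj G u v}" for v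
  proof -
    have "{u\<in>S. adj G u v} = {u\<in>T. adj G u v} \<union> {u\<in>S - T. adj G u v}" using TS by auto
    moreover have "card ({u\<in>T. adj G u v} \<union> {u\<in>S - T. adj G u v})
                   = card {u\<in>T. adj G u v} + card {u\<in>S - T. adj G u v}"
      using S T by (intro card_Un_disjoint) auto
    ultimately show ?thesis unfolding degIn_def by simp
  qed
  have "(\<Sum>v\<in>T. real (degIn G S v))
        = real (\<Sum>v\<in>T. card {u\<in>T. adj G u v}) + real (\<Sum>v\<in>T. card {u\<in>S - T. adj G u v})"
    by (simp add: split sum.distrib)
  thus ?thesis using sum_inner_degrees[OF T, of G] sum_outer_degrees[OF S TS, of G] by linarith
qed

lemma bad_pair_dichotomy:
  assumes bad: "bad_pair n \<sigma> \<tau> \<Delta> G" and \<theta>: "\<theta> > 0" and tau: "\<tau> > 0"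
    and m: "(\<Delta> - 2 * \<theta>) * \<tau> > 1"
  shows "(\<exists>U. U \<subseteq> {..<n} \<and> U \<noteq> {} \<and> real (card U) \<le> \<sigma> * real n \<and>
             nat \<lceil>\<theta> * real (card U)\<rceil> \<le> card (present G (pairs_in U)))
       \<or> (\<exists>S T. S \<subseteq> {..<n} \<and> S \<noteq> {} \<and> real (card S) \<le> \<sigma> * real n \<and> T \<subseteq> S \<and>
             nat \<lceil>(\<Delta> - 2 * \<theta>) * \<tau> * real (card S)\<rceil> \<le> card (present G (cross_pairs T S)))"
proof -
  obtain S T where TS: "T \<subseteq> S" and Sn: "S \<subseteq> {..<n}" and Sne: "S \<noteq> {}"
    and Ss: "real (card S) \<le> \<sigma> * real n" and Tt: "real (card T) \<ge> \<tau> * real (card S)"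
    and deg: "\<forall>v\<in>T. real (degIn G S v) \<ge> \<Delta>"
    using bad unfolding bad_pair_def by blast
  define eT where "eT = real (card (present G (pairs_in T)))"
  define eX where "eX = real (card (present G (cross_pairs T S)))"
  have finS: "finite S" using Sn finite_subset by blast
  have "card S > 0" using finS Sne by (simp add: card_gt_0_iff)
  hence Tpos: "real (card T) > 0" using Tt tau by (smt (verit) mult_pos_pos of_nat_0_less_iff)
  have Dpos: "\<Delta> - 2 * \<theta> > 0" using m tau by (smt (verit) mult_nonpos_nonneg)
  have "\<Delta> * real (card T) = (\<Sum>v\<in>T. \<Delta>)" by simp
  also have "\<dots> \<le> (\<Sum>v\<in>T. real (degIn G S v))" using deg by (intro sum_mono) auto
  also have "\<dots> \<le> 2 * eT + eX" unfolding eT_def eX_def by (rule sum_degrees_le[OF finS TS])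
  finally have key: "\<Delta> * real (card T) \<le> 2 * eT + eX" .
  show ?thesis
  proof (cases "\<theta> * real (card T) \<le> eT")
    case True
    have "real (card T) \<le> real (card S)" using card_mono[OF finS TS] by simp
    thus ?thesis using True Tpos TS Sn Ss unfolding eT_def
      by (intro disjI1 exI[of _ T]) (auto simp: nat_le_iff ceiling_le_iff)
  next
    case False
    have "(\<Delta> - 2 * \<theta>) * \<tau> * real (card S) \<le> (\<Delta> - 2 * \<theta>) * real (card T)"
      using Tt Dpos by (simp add: mult.assoc)
    also have "\<dots> \<le> eX" using key False by (simp add: algebra_simps)
    finally show ?thesis using Sn Sne Ss TS unfolding eX_def
      by (intro disjI2 exI[of _ S] exI[of _ T]) (auto simp: nat_le_iff ceiling_le_iff)
  qed
qed

section \<open>Heavy events\<close>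

definition heavy_event ::
    "nat \<Rightarrow> nat \<Rightarrow> real \<Rightarrow> (nat set \<Rightarrow> 'i set) \<Rightarrow> (nat set \<Rightarrow> 'i \<Rightarrow> (nat \<times> nat) set)
     \<Rightarrow> (nat \<times> nat \<Rightarrow> bool) set" where
  "heavy_event n N \<gamma> I P = (\<Union>t\<in>{1..N}. \<Union>U\<in>{U. U \<subseteq> {..<n} \<and> card U = t}. \<Union>i\<in>I U.
      {G. nat \<lceil>\<gamma> * real t\<rceil> \<le> card (present G (P U i))})"

lemma heavy_eventI:
  assumes "U \<subseteq> {..<n}" "U \<noteq> {}" "real (card U) \<le> x" "i \<in> I U"
    and "nat \<lceil>\<gamma> * real (card U)\<rceil> \<le> card (present G (P U i))"
  shows "G \<in> heavy_event n (nat \<lfloor>x\<rfloor>) \<gamma> I P"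
proof -
  have "finite U" using assms(1) finite_subset by blast
  hence "card U \<in> {1..nat \<lfloor>x\<rfloor>}"
    using assms(2,3) by (auto simp: Suc_le_eq card_gt_0_iff le_nat_floor)
  thus ?thesis using assms unfolding heavy_event_def by blast
qed

lemma bad_pair_heavy:
  assumes "bad_pair n \<sigma> \<tau> \<Delta> G" "\<theta> > 0" "\<tau> > 0" "(\<Delta> - 2 * \<theta>) * \<tau> > 1"
  shows "G \<in> heavy_event n (nat \<lfloor>\<sigma> * real n\<rfloor>) \<theta> (\<lambda>_. {()}) (\<lambda>U _. pairs_in U)
           \<union> heavy_event n (nat \<lfloor>\<sigma> * real n\<rfloor>) ((\<Delta> - 2 * \<theta>) * \<tau>) Pow (\<lambda>S T. cross_pairs T S)"
  using bad_pair_dichotomy[OF assms]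
  by (elim disjE exE conjE) (auto intro: heavy_eventI)

lemma level_term_bound:
  fixes n t :: nat and \<sigma> \<gamma> D a b :: real
  assumes n: "n > 0" and t: "t \<ge> 1" "real t \<le> \<sigma> * real n" and \<sigma>: "\<sigma> > 0" "\<sigma> \<le> 1"
    and \<gamma>: "\<gamma> > 1" and D: "D \<ge> 0" and a: "a > 0" and b: "b \<ge> 1"
    and hyp: "(\<sigma> * exp 1 * D / (a * \<gamma>)) powr \<gamma> \<le> \<sigma> / (2 * b * exp 1)"
  defines "k \<equiv> nat \<lceil>\<gamma> * real t\<rceil>"
  shows "real (n choose t) * b ^ t * (exp 1 * (real t ^ 2 / a) * (D / real n) / real k) ^ k
         \<le> ((real t / (\<sigma> * real n)) powr (\<gamma> - 1) / 2) ^ t"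
proof -
  define r where "r = real t / (\<sigma> * real n)"
  define z where "z = \<sigma> * exp 1 * D / (a * \<gamma>)"
  define c where "c = \<sigma> / (2 * b * exp 1)"
  have tpos: "real t > 0" and npos: "real n > 0" using t n by auto
  have kr: "real k \<ge> \<gamma> * real t" unfolding k_def by linarith
  have gt: "\<gamma> * real t > 0" using \<gamma> tpos by simp
  have k1: "k \<ge> 1" unfolding k_def using \<gamma> t by (simp add: Suc_le_eq)
  have r0: "r > 0" and r1: "r \<le> 1" unfolding r_def using tpos npos \<sigma> t by (auto simp: divide_le_eq)
  have z0: "z \<ge> 0" unfolding z_def using \<sigma> D a \<gamma> by simp
  have "exp 1 \<ge> (2::real)" using exp_ge_add_one_self[of 1] by simp
  hence "2 * b * exp 1 \<ge> 2 * 1 * 2" using b by (intro mult_mono) auto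
  hence "\<sigma> < 2 * b * exp 1" using \<sigma> by linarith
  hence c1: "c < 1" unfolding c_def using b by (simp add: divide_less_eq)
  have z1: "z \<le> 1" using le_one_if_powr_less_one[OF z0 _ _ c1, of \<gamma>] hyp \<gamma>
    unfolding z_def c_def by simp
  have base0: "0 \<le> exp 1 * (real t ^ 2 / a) * (D / real n) / real k" using a D by simp
  have "exp 1 * (real t ^ 2 / a) * (D / real n) / real k
        \<le> exp 1 * (real t ^ 2 / a) * (D / real n) / (\<gamma> * real t)"
    using a D npos kr gt by (intro divide_left_mono) auto
  also have "\<dots> = r * z" unfolding r_def z_def using tpos npos \<sigma> a \<gamma>
    by (simp add: field_simps power2_eq_square)
  finally have "(exp 1 * (real t ^ 2 / a) * (D / real n) / real k) ^ k \<le> (r * z) ^ k"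
    using base0 by (intro power_mono)
  also have "\<dots> \<le> ((r * z) powr \<gamma>) ^ t"
    using r0 r1 z0 z1 kr k1 t by (intro pow_le_powr_pow) (auto simp: mult_le_one)
  also have "\<dots> \<le> (r powr \<gamma> * c) ^ t"
  proof (rule power_mono)
    have "(r * z) powr \<gamma> = r powr \<gamma> * z powr \<gamma>" using r0 z0 by (simp add: powr_mult)
    also have "\<dots> \<le> r powr \<gamma> * c" using hyp unfolding z_def c_def by (intro mult_left_mono) auto
    finally show "(r * z) powr \<gamma> \<le> r powr \<gamma> * c" .
  qed simp
  finally have "real (n choose t) * b ^ t * (exp 1 * (real t ^ 2 / a) * (D / real n) / real k) ^ k
                \<le> (exp 1 * real n / real t) ^ t * b ^ t * (r powr \<gamma> * c) ^ t"
    using b t zero_le_power[OF base0] by (intro mult_mono binomial_le_exp_pow) auto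
  also have "\<dots> = (exp 1 * real n / real t * b * (r powr \<gamma> * c)) ^ t"
    by (simp only: power_mult_distrib)
  also have "exp 1 * real n / real t * b * (r powr \<gamma> * c) = r powr \<gamma> / r / 2"
    unfolding r_def c_def using tpos npos b \<sigma> by (simp add: field_simps)
  also have "r powr \<gamma> / r = r powr (\<gamma> - 1)" using r0 by (simp add: powr_diff)
  finally show ?thesis unfolding r_def .
qed

lemma prob_heavy_event:
  fixes \<sigma> \<gamma> D a b :: real and I :: "nat set \<Rightarrow> 'i set"
  assumes n: "n > 0" and \<sigma>: "\<sigma> > 0" "\<sigma> \<le> 1" and \<gamma>: "\<gamma> > 1" and D: "D \<ge> 0" "D / real n \<le> 1"
    and a: "a > 0" and b: "b \<ge> 1"
    and hyp: "(\<sigma> * exp 1 * D / (a * \<gamma>)) powr \<gamma> \<le> \<sigma> / (2 * b * exp 1)"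
    and I: "\<And>U. U \<subseteq> {..<n} \<Longrightarrow> finite (I U) \<and> real (card (I U)) \<le> b ^ card U"
    and P: "\<And>U i. U \<subseteq> {..<n} \<Longrightarrow> i \<in> I U \<Longrightarrow>
              P U i \<subseteq> vertex_pairs n \<and> real (card (P U i)) \<le> real (card U) ^ 2 / a"
  shows "measure_pmf.prob (gnp n (D / real n)) (heavy_event n (nat \<lfloor>\<sigma> * real n\<rfloor>) \<gamma> I P)
         \<le> (\<Sum>t\<in>{1..nat \<lfloor>\<sigma> * real n\<rfloor>}. ((real t / (\<sigma> * real n)) powr (\<gamma> - 1) / 2) ^ t)"
proof -
  let ?M = "gnp n (D / real n)"
  let ?E = "\<lambda>t U i. {G. nat \<lceil>\<gamma> * real t\<rceil> \<le> card (present G (P U i))}"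
  let ?c = "\<lambda>t. (exp 1 * (real t ^ 2 / a) * (D / real n) / real (nat \<lceil>\<gamma> * real t\<rceil>)) ^ nat \<lceil>\<gamma> * real t\<rceil>"
  have p: "0 \<le> D / real n" "D / real n \<le> 1" using D by auto
  have union_bound: "measure_pmf.prob ?M (\<Union>i\<in>J. A i) \<le> (\<Sum>i\<in>J. f i)"
    if "finite J" "\<And>i. i \<in> J \<Longrightarrow> measure_pmf.prob ?M (A i) \<le> f i" for J and A :: "_ \<Rightarrow> _ set" and f
    by (rule order.trans[OF measure_pmf.finite_measure_subadditive_finite sum_mono]) (use that in auto)
  have level: "measure_pmf.prob ?M (\<Union>U\<in>{U. U \<subseteq> {..<n} \<and> card U = t}. \<Union>i\<in>I U. ?E t U i)
               \<le> ((real t / (\<sigma> * real n)) powr (\<gamma> - 1) / 2) ^ t"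
    if t: "t \<in> {1..nat \<lfloor>\<sigma> * real n\<rfloor>}" for t
  proof -
    have k1: "nat \<lceil>\<gamma> * real t\<rceil> \<ge> 1" using \<gamma> t by (simp add: Suc_le_eq)
    have "measure_pmf.prob ?M (\<Union>U\<in>{U. U \<subseteq> {..<n} \<and> card U = t}. \<Union>i\<in>I U. ?E t U i)
          \<le> (\<Sum>U\<in>{U. U \<subseteq> {..<n} \<and> card U = t}. b ^ t * ?c t)"
    proof (rule union_bound)
      show "finite {U. U \<subseteq> {..<n} \<and> card U = t}" by (rule finite_subset[of _ "Pow {..<n}"]) auto
      fix U assume U: "U \<in> {U. U \<subseteq> {..<n} \<and> card U = t}"
      have "measure_pmf.prob ?M (\<Union>i\<in>I U. ?E t U i) \<le> (\<Sum>i\<in>I U. ?c t)"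
        using I[of U] U P[of U] by (intro union_bound prob_many_present p k1) auto
      also have "\<dots> \<le> b ^ t * ?c t" using I[of U] U a D by (simp add: mult_right_mono)
      finally show "measure_pmf.prob ?M (\<Union>i\<in>I U. ?E t U i) \<le> b ^ t * ?c t" .
    qed
    also have "\<dots> = real (n choose t) * b ^ t * ?c t" by (simp add: n_subsets)
    also have "\<dots> \<le> ((real t / (\<sigma> * real n)) powr (\<gamma> - 1) / 2) ^ t"
      using t n \<sigma> \<gamma> D a b hyp by (intro level_term_bound) (auto simp: real_le_of_le_nat_floor)
    finally show ?thesis .
  qed
  show ?thesis unfolding heavy_event_def by (rule union_bound) (use level in auto)
qed

corollary prob_dense_set:
  assumes "n > 0" "\<sigma> > 0" "\<sigma> \<le> 1" "\<theta> > 1" "D \<ge> 0" "D / real n \<le> 1"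
    and "(\<sigma> * exp 1 * D / (2 * \<theta>)) powr \<theta> \<le> \<sigma> / (2 * exp 1)"
  shows "measure_pmf.prob (gnp n (D / real n))
           (heavy_event n (nat \<lfloor>\<sigma> * real n\<rfloor>) \<theta> (\<lambda>_. {()}) (\<lambda>U _. pairs_in U))
         \<le> (\<Sum>t\<in>{1..nat \<lfloor>\<sigma> * real n\<rfloor>}. ((real t / (\<sigma> * real n)) powr (\<theta> - 1) / 2) ^ t)"
proof (rule prob_heavy_event)
  show "(\<sigma> * exp 1 * D / (2 * \<theta>)) powr \<theta> \<le> \<sigma> / (2 * 1 * exp 1)" using assms(7) by simp
  show "finite {()} \<and> real (card {()}) \<le> 1 ^ card U" if "U \<subseteq> {..<n}" for U :: "nat set"
    by simp
  show "pairs_in U \<subseteq> vertex_pairs n \<and> real (card (pairs_in U)) \<le> real (card U) ^ 2 / 2"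
    if "U \<subseteq> {..<n}" "i \<in> {()}" for U i
    using pairs_in_vertex_pairs[OF that(1)] card_pairs_in[OF finite_subset[OF that(1) finite_lessThan]]
    by simp
qed (use assms in auto)

corollary prob_cross_set:
  assumes "n > 0" "\<sigma> > 0" "\<sigma> \<le> 1" "m > 1" "D \<ge> 0" "D / real n \<le> 1"
    and "(\<sigma> * exp 1 * D / m) powr m \<le> \<sigma> / (4 * exp 1)"
  shows "measure_pmf.prob (gnp n (D / real n))
           (heavy_event n (nat \<lfloor>\<sigma> * real n\<rfloor>) m Pow (\<lambda>S T. cross_pairs T S))
         \<le> (\<Sum>t\<in>{1..nat \<lfloor>\<sigma> * real n\<rfloor>}. ((real t / (\<sigma> * real n)) powr (m - 1) / 2) ^ t)"
proof (rule prob_heavy_event)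
  show "(\<sigma> * exp 1 * D / (1 * m)) powr m \<le> \<sigma> / (2 * 2 * exp 1)" using assms(7) by simp
  show "finite (Pow S) \<and> real (card (Pow S)) \<le> 2 ^ card S" if "S \<subseteq> {..<n}" for S :: "nat set"
    using finite_subset[OF that] by (simp add: card_Pow)
  show "cross_pairs T S \<subseteq> vertex_pairs n \<and> real (card (cross_pairs T S)) \<le> real (card S) ^ 2 / 1"
    if "S \<subseteq> {..<n}" "T \<in> Pow S" for S T
    using cross_pairs_vertex_pairs[OF that(1) PowD[OF that(2)]]
      card_cross_pairs[OF finite_subset[OF that(1) finite_lessThan] PowD[OF that(2)]]
    by simp
qed (use assms in auto)

section \<open>The sums tend to zero\<close>

lemma powr_le_const_sqrt2_pow:
  fixes \<alpha> :: real
  obtains K where "K > 0" "\<And>t::nat. real t powr \<alpha> \<le> K * sqrt 2 ^ t"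
proof -
  have "((\<lambda>x::real. x powr \<alpha> / sqrt 2 powr x) \<longlongrightarrow> 0) at_top" by real_asymp
  hence "(\<lambda>t::nat. real t powr \<alpha> / sqrt 2 powr real t) \<longlonglongrightarrow> 0"
    by (rule filterlim_compose[OF _ filterlim_real_sequentially])
  hence "Bseq (\<lambda>t::nat. real t powr \<alpha> / sqrt 2 powr real t)"
    by (rule convergent_imp_Bseq[OF convergentI])
  then obtain K where K: "K > 0" "\<And>t. norm (real t powr \<alpha> / sqrt 2 powr real t) \<le> K"
    by (auto simp: Bseq_def)
  have "real t powr \<alpha> \<le> K * sqrt 2 ^ t" for t :: nat
    using K(2)[of t] by (simp add: powr_realpow divide_le_eq)
  thus ?thesis using that K(1) by blast
qed

lemma term_le_geometric:
  fixes \<alpha> x K :: real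
  assumes \<alpha>: "\<alpha> > 0" and t: "t \<ge> 1" "real t \<le> x" and K: "real t powr \<alpha> \<le> K * sqrt 2 ^ t"
  shows "((real t / x) powr \<alpha> / 2) ^ t \<le> K * (1 / sqrt 2) ^ t / x powr \<alpha>"
proof -
  define y where "y = (real t / x) powr \<alpha>"
  have x: "x > 0" using t by simp
  have y0: "y \<ge> 0" and y1: "y \<le> 1" unfolding y_def using t \<alpha> x by (auto intro: powr_le1)
  have "sqrt 2 / 2 = 1 / sqrt (2::real)" by (simp add: field_simps)
  hence halves: "sqrt 2 ^ t / 2 ^ t = (1 / sqrt 2) ^ t" by (metis power_divide)
  have "(y / 2) ^ t = y ^ t / 2 ^ t" by (simp add: power_divide)
  also have "\<dots> \<le> y / 2 ^ t" using power_decreasing[OF t(1) y0 y1] by (simp add: divide_right_mono)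
  also have "\<dots> = real t powr \<alpha> / x powr \<alpha> / 2 ^ t" unfolding y_def using x by (simp add: powr_divide)
  also have "\<dots> \<le> K * sqrt 2 ^ t / x powr \<alpha> / 2 ^ t"
    using K by (intro divide_right_mono) auto
  also have "\<dots> = K * (sqrt 2 ^ t / 2 ^ t) / x powr \<alpha>" by simp
  also have "\<dots> = K * (1 / sqrt 2) ^ t / x powr \<alpha>" by (simp only: halves)
  finally show ?thesis unfolding y_def .
qed

lemma level_sum_tendsto_zero:
  fixes \<alpha> \<sigma> :: real
  assumes \<alpha>: "\<alpha> > 0" and \<sigma>: "\<sigma> > 0"
  shows "(\<lambda>n. \<Sum>t\<in>{1..nat \<lfloor>\<sigma> * real n\<rfloor>}. ((real t / (\<sigma> * real n)) powr \<alpha> / 2) ^ t) \<longlonglongrightarrow> 0"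
proof -
  obtain K where K: "K > 0" "\<And>t::nat. real t powr \<alpha> \<le> K * sqrt 2 ^ t"
    using powr_le_const_sqrt2_pow by blast
  define q :: real where "q = 1 / sqrt 2"
  have q: "0 < q" "q < 1" unfolding q_def by auto
  define M where "M = K / (1 - q)"
  have bound: "(\<Sum>t\<in>{1..nat \<lfloor>\<sigma> * real n\<rfloor>}. ((real t / (\<sigma> * real n)) powr \<alpha> / 2) ^ t)
               \<le> M / (\<sigma> * real n) powr \<alpha>" for n
  proof -
    let ?x = "\<sigma> * real n"
    have "(\<Sum>t\<in>{1..nat \<lfloor>?x\<rfloor>}. ((real t / ?x) powr \<alpha> / 2) ^ t)
          \<le> (\<Sum>t\<in>{1..nat \<lfloor>?x\<rfloor>}. K * q ^ t / ?x powr \<alpha>)"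
      unfolding q_def using \<alpha> K(2)
      by (intro sum_mono term_le_geometric) (auto simp: real_le_of_le_nat_floor)
    also have "\<dots> = K * (\<Sum>t\<in>{1..nat \<lfloor>?x\<rfloor>}. q ^ t) / ?x powr \<alpha>"
      by (simp add: sum_divide_distrib sum_distrib_left)
    also have "\<dots> \<le> K * (\<Sum>t. q ^ t) / ?x powr \<alpha>"
      using K(1) q by (intro divide_right_mono mult_left_mono sum_le_suminf)
        (auto intro: summable_geometric)
    also have "(\<Sum>t. q ^ t) = 1 / (1 - q)" using q by (simp add: suminf_geometric)
    finally show ?thesis unfolding M_def by simp
  qed
  have "((\<lambda>x::real. M / (\<sigma> * x) powr \<alpha>) \<longlongrightarrow> 0) at_top" using \<alpha> \<sigma> by real_asymp
  hence lim: "(\<lambda>n. M / (\<sigma> * real n) powr \<alpha>) \<longlonglongrightarrow> 0"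
    by (rule filterlim_compose[OF _ filterlim_real_sequentially])
  show ?thesis
  proof (rule tendsto_sandwich[OF _ _ tendsto_const lim])
    show "\<forall>\<^sub>F n in sequentially.
            0 \<le> (\<Sum>t\<in>{1..nat \<lfloor>\<sigma> * real n\<rfloor>}. ((real t / (\<sigma> * real n)) powr \<alpha> / 2) ^ t)"
      by (intro always_eventually allI sum_nonneg) simp
  qed (intro always_eventually allI bound)
qed

lemma prob_bad_pair_le:
  assumes n: "n > 0" and \<sigma>: "\<sigma> > 0" "\<sigma> \<le> 1" and \<theta>: "\<theta> > 1" and \<tau>: "\<tau> > 0"
    and m: "(\<Delta> - 2 * \<theta>) * \<tau> > 1" and D: "D \<ge> 0" "D / real n \<le> 1"
    and hyp_\<theta>: "(\<sigma> * exp 1 * D / (2 * \<theta>)) powr \<theta> \<le> \<sigma> / (2 * exp 1)"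
    and hyp_m: "(\<sigma> * exp 1 * D / ((\<Delta> - 2 * \<theta>) * \<tau>)) powr ((\<Delta> - 2 * \<theta>) * \<tau>) \<le> \<sigma> / (4 * exp 1)"
  shows "measure_pmf.prob (gnp n (D / real n)) {G. bad_pair n \<sigma> \<tau> \<Delta> G}
         \<le> (\<Sum>t\<in>{1..nat \<lfloor>\<sigma> * real n\<rfloor>}. ((real t / (\<sigma> * real n)) powr (\<theta> - 1) / 2) ^ t)
           + (\<Sum>t\<in>{1..nat \<lfloor>\<sigma> * real n\<rfloor>}.
                ((real t / (\<sigma> * real n)) powr ((\<Delta> - 2 * \<theta>) * \<tau> - 1) / 2) ^ t)"
proof -
  let ?M = "gnp n (D / real n)" and ?N = "nat \<lfloor>\<sigma> * real n\<rfloor>"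
  have "measure_pmf.prob ?M {G. bad_pair n \<sigma> \<tau> \<Delta> G}
        \<le> measure_pmf.prob ?M (heavy_event n ?N \<theta> (\<lambda>_. {()}) (\<lambda>U _. pairs_in U)
             \<union> heavy_event n ?N ((\<Delta> - 2 * \<theta>) * \<tau>) Pow (\<lambda>S T. cross_pairs T S))"
    using bad_pair_heavy[of n \<sigma> \<tau> \<Delta> _ \<theta>] \<theta> \<tau> m
    by (intro measure_pmf.finite_measure_mono) auto
  also have "\<dots> \<le> measure_pmf.prob ?M (heavy_event n ?N \<theta> (\<lambda>_. {()}) (\<lambda>U _. pairs_in U))
      + measure_pmf.prob ?M (heavy_event n ?N ((\<Delta> - 2 * \<theta>) * \<tau>) Pow (\<lambda>S T. cross_pairs T S))"
    by (rule measure_Un_le) auto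
  finally show ?thesis
    using prob_dense_set[OF n \<sigma> \<theta> D hyp_\<theta>] prob_cross_set[OF n \<sigma> m D hyp_m] by linarith
qed

text \<open>The hypothesis on m bounds d, so that p = d n / n \<le> 1 for large n.\<close>
lemma eventually_edge_prob_le_one:
  fixes d :: "nat \<Rightarrow> real"
  assumes d: "\<And>n. d n \<ge> 0" and \<sigma>: "0 < \<sigma>" "\<sigma> \<le> 1" and m: "m > 1"
    and hyp: "\<forall>\<^sub>F n in sequentially. (\<sigma> * exp 1 * d n / m) powr m \<le> \<sigma> / (4 * exp 1)"
  shows "\<forall>\<^sub>F n in sequentially. d n / real n \<le> 1"
  using hyp eventually_ge_at_top[of "nat \<lceil>m / (\<sigma> * exp 1)\<rceil>"]
proof eventually_elim
  case (elim n)
  have c1: "\<sigma> / (4 * exp 1) < 1" using \<sigma> exp_ge_add_one_self[of 1] by (simp add: divide_less_eq)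
  have "\<sigma> * exp 1 * d n / m \<le> 1"
    using m \<sigma> d[of n] by (intro le_one_if_powr_less_one[OF _ _ elim(1) c1]) auto
  hence "d n * (\<sigma> * exp 1) \<le> m" using m by (simp add: divide_le_eq ac_simps)
  hence "d n \<le> m / (\<sigma> * exp 1)" using \<sigma> by (simp add: pos_le_divide_eq)
  also have "\<dots> \<le> real n" using elim(2) by simp
  finally show ?case by (simp add: divide_le_eq)
qed

text \<open>The main theorem.\<close>
theorem lemma2:
  fixes d :: "nat \<Rightarrow> real" and \<sigma> \<theta> \<Delta> \<tau> :: real
  assumes d_nonneg: "\<And>n. d n \<ge> 0"
    and theta: "\<theta> > 1"
    and sigma: "0 < \<sigma>" "\<sigma> \<le> 1"
    and hyp_theta: "eventually (\<lambda>n. (\<sigma> * exp 1 * d n / (2 * \<theta>)) powr \<theta> \<le> \<sigma> / (2 * exp 1)) at_top"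
    and d_small_theta: "d \<in> o(\<lambda>n. real n powr (1 - 1 / \<theta>))"
    and Delta: "\<Delta> > 0" and tau: "\<tau> > 0"
    and m_gt: "(\<Delta> - 2 * \<theta>) * \<tau> > 1"
    and hyp_m: "eventually (\<lambda>n. (\<sigma> * exp 1 * d n / ((\<Delta> - 2 * \<theta>) * \<tau>)) powr ((\<Delta> - 2 * \<theta>) * \<tau>)
                   \<le> \<sigma> / (4 * exp 1)) at_top"
    and d_small_m: "d \<in> o(\<lambda>n. real n powr (1 - 1 / ((\<Delta> - 2 * \<theta>) * \<tau>)))"
  shows "(\<lambda>n. measure_pmf.prob (gnp n (d n / real n)) {G. bad_pair n \<sigma> \<tau> \<Delta> G}) \<longlonglongrightarrow> 0"
proof -
  define m where "m = (\<Delta> - 2 * \<theta>) * \<tau>"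
  have m1: "m > 1" using m_gt unfolding m_def .
  define bound where
    "bound = (\<lambda>\<gamma> n. \<Sum>t\<in>{1..nat \<lfloor>\<sigma> * real n\<rfloor>}. ((real t / (\<sigma> * real n)) powr (\<gamma> - 1) / 2) ^ t)"
  have p_le_1: "\<forall>\<^sub>F n in sequentially. d n / real n \<le> 1"
    using eventually_edge_prob_le_one[OF d_nonneg sigma m1] hyp_m unfolding m_def by simp
  have upper: "\<forall>\<^sub>F n in sequentially.
      measure_pmf.prob (gnp n (d n / real n)) {G. bad_pair n \<sigma> \<tau> \<Delta> G} \<le> bound \<theta> n + bound m n"
    using hyp_theta hyp_m p_le_1 eventually_gt_at_top[of 0]
  proof eventually_elim
    case (elim n)
    thus ?case unfolding bound_def m_def
      by (intro prob_bad_pair_le sigma theta tau m_gt d_nonneg) auto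
  qed
  have lim: "(\<lambda>n. bound \<theta> n + bound m n) \<longlonglongrightarrow> 0"
    unfolding bound_def using theta m1 sigma
    by (intro tendsto_add_zero level_sum_tendsto_zero) auto
  show ?thesis by (rule tendsto_sandwich[OF _ upper tendsto_const lim]) simp
qed

end
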